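(* The function $\epsilon':[1,\infty)\to\mathbb{R}$ is increasing and negative. For each integer $N\ge1$, $\epsilon'(x)=\epsilon'(y)$ whenever $N\le x\le y<N+1$, and $\epsilon'(x)<\epsilon'(y)$ whenever $N\le x<N+1\le y$. If moreover $\hat w=\sup_xw(x)<\infty$, then for all $\lambda\ge1$, $\frac{C}{(2\hat w+\lfloor\lambda\rfloor-1)^2}\le|\epsilon'(\lambda)|\le\frac{\hat w}{\lfloor\lambda\rfloor(\lfloor\lambda\rfloor+1)}$, where $C=\int_{\mathbb{S}}w(x)\pi(dx)\in[1,\hat w]$.
   Context: Let $\pi,q$ be probability densities with respect to a $\sigma$-finite measure $\mu$ on $\mathbb{X}$ with $q>0$ wherever $\pi>0$; $\pi(dx)=\pi(x)\mu(dx)$, $q(dx)=q(x)\mu(dx)$, $\mathbb{S}=\{\pi>0\}$, $w=\pi/q$ on $\mathbb{S}$ and $0$ elsewhere. For integer $N\ge1$, $\epsilon(N)=\int_{\mathbb{S}}\int_{\mathbb{X}^{N-1}}\frac{w(z_1)}{\sum_{i=1}^Nw(z_i)}\prod_{n=2}^Nq(dz_n)\pi(dz_1)$ (average rejection probability of i-SIR with $N$ proposals), and for $\lambda\ge1$ the extended derivative is $\epsilon'(\lambda)=\epsilon(\lfloor\lambda\rfloor+1)-\epsilon(\lfloor\lambda\rfloor)$. *)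

theory Defs
  imports "HOL-Probability.Probability"
begin

definition wgt :: "('a \<Rightarrow> real) \<Rightarrow> ('a \<Rightarrow> real) \<Rightarrow> 'a \<Rightarrow> real" where
  "wgt p q x = (if p x > 0 then p x / q x else 0)"

text \<open>Average rejection probability of i-SIR with N proposals:
  eps(N) = int_S int_{X^(N-1)} w(z1) / (sum_{i=1}^N w(z_i)) prod_{n=2}^N q(dz_n) pi(dz_1).\<close>
definition eps :: "'a measure \<Rightarrow> ('a \<Rightarrow> real) \<Rightarrow> ('a \<Rightarrow> real) \<Rightarrow> nat \<Rightarrow> real" where
  "eps M p q N =
     (\<integral> z1. indicator {x \<in> space M. p x > 0} z1 *
        (\<integral> z. wgt p q z1 / (wgt p q z1 + (\<Sum>i\<in>{2..N}. wgt p q (z i)))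
           \<partial>(PiM {2..N} (\<lambda>_. density M (\<lambda>x. ennreal (q x)))))
      \<partial>(density M (\<lambda>x. ennreal (p x))))"

definition eps' :: "'a measure \<Rightarrow> ('a \<Rightarrow> real) \<Rightarrow> ('a \<Rightarrow> real) \<Rightarrow> real \<Rightarrow> real" where
  "eps' M p q l = eps M p q (nat \<lfloor>l\<rfloor> + 1) - eps M p q (nat \<lfloor>l\<rfloor>)"

end

theory Submission
  imports Defs
begin

text \<open>Writing integrals against pi as integrals against the proposal Q weighted by w, one gets
  eps(n) = E[w(X_1)^2 / S_n] for i.i.d. samples X_1, X_2, ... from Q, where
  S_n = w(X_1) + ... + w(X_n). Hence eps(n+1) - eps(n) = -E[D_n] with
  D_n = w(X_1)^2 w(X_(n+1)) / (S_(n+1) S_n), which is positive with positive probability.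
  Exchanging X_(n+1) and X_(n+2) shows that E[D_n] is also the expectation of
  w(X_1)^2 w(X_(n+2)) / ((S_n + w(X_(n+2))) S_n), and adding w(X_(n+1)) to S_n in both
  factors of this denominator yields D_(n+1); so the increments of eps strictly increase.
  If w is bounded by B, then D_n <= B (w(X_1)/S_n) (w(X_(n+1))/S_(n+1)), and by exchangeability the
  expected product of these two shares is at most 1/(n(n+1)). Conversely
  S_n S_(n+1) <= (2B + R)^2 with R = w(X_2) + ... + w(X_n); bounding 1/t^2 from below by its
  tangent at t0 = 2B + n - 1 leaves a function affine in R, whose expectation is
  E[w^2] / t0^2 by independence and E[w] = 1.\<close>

section \<open>Integrals over finite powers of a probability space\<close>

lemma (in prob_space) integral_PiM_restrict:
  fixes f :: "('i \<Rightarrow> 'a) \<Rightarrow> real"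
  assumes "finite K" "J \<subseteq> K" and f[measurable]: "f \<in> borel_measurable (Pi\<^sub>M J (\<lambda>_. M))"
    and "\<And>z. z \<in> space (Pi\<^sub>M K (\<lambda>_. M)) \<Longrightarrow> f (restrict z J) = f z"
  shows "(\<integral>z. f z \<partial>Pi\<^sub>M J (\<lambda>_. M)) = (\<integral>z. f z \<partial>Pi\<^sub>M K (\<lambda>_. M))"
proof -
  interpret P: product_prob_space "\<lambda>_. M" by unfold_locales
  have "(\<integral>z. f z \<partial>Pi\<^sub>M J (\<lambda>_. M)) = (\<integral>z. f z \<partial>distr (Pi\<^sub>M K (\<lambda>_. M)) (Pi\<^sub>M J (\<lambda>_. M)) (\<lambda>z. restrict z J))"
    using P.distr_restrict[OF assms(2,1)] by simp
  also have "\<dots> = (\<integral>z. f (restrict z J) \<partial>Pi\<^sub>M K (\<lambda>_. M))"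
    using assms(2) by (intro integral_distr) (auto intro!: measurable_restrict_subset)
  also have "\<dots> = (\<integral>z. f z \<partial>Pi\<^sub>M K (\<lambda>_. M))"
    using assms(4) by (intro Bochner_Integration.integral_cong) auto
  finally show ?thesis .
qed

lemma (in prob_space) integral_PiM_reindex:
  fixes f :: "('i \<Rightarrow> 'a) \<Rightarrow> real"
  assumes "g permutes K" and f[measurable]: "f \<in> borel_measurable (Pi\<^sub>M K (\<lambda>_. M))"
  shows "(\<integral>z. f (\<lambda>i\<in>K. z (g i)) \<partial>Pi\<^sub>M K (\<lambda>_. M)) = (\<integral>z. f z \<partial>Pi\<^sub>M K (\<lambda>_. M))"
proof -
  have g: "inj_on g K" "g \<in> K \<rightarrow> K"
    using assms(1) by (auto simp: permutes_inj_on permutes_in_image)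
  have "distr (Pi\<^sub>M K (\<lambda>_. M)) (Pi\<^sub>M K (\<lambda>_. M)) (\<lambda>z. \<lambda>i\<in>K. z (g i)) = Pi\<^sub>M K (\<lambda>_. M)"
    using distr_PiM_reindex[of K "\<lambda>_. M", OF _ g] prob_space_axioms by simp
  moreover have "(\<lambda>z. \<lambda>i\<in>K. z (g i)) \<in> Pi\<^sub>M K (\<lambda>_. M) \<rightarrow>\<^sub>M Pi\<^sub>M K (\<lambda>_. M)"
    using g by (intro measurable_restrict) (auto intro!: measurable_component_singleton)
  ultimately show ?thesis
    by (metis f integral_distr)
qed

lemma (in prob_space) integral_PiM_insert_rev:
  fixes f :: "('i \<Rightarrow> 'a) \<Rightarrow> real"
  assumes "finite I" "i \<notin> I" and f: "integrable (Pi\<^sub>M (insert i I) (\<lambda>_. M)) f"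
  shows "(\<integral>z. f z \<partial>Pi\<^sub>M (insert i I) (\<lambda>_. M)) = (\<integral>y. (\<integral>z. f (z(i := y)) \<partial>Pi\<^sub>M I (\<lambda>_. M)) \<partial>M)"
proof -
  interpret P: product_prob_space "\<lambda>_. M" by unfold_locales
  have sf_I: "sigma_finite_measure (Pi\<^sub>M I (\<lambda>_. M))"
    by (simp add: prob_space_PiM prob_space_axioms prob_space_imp_sigma_finite)
  have f_meas[measurable]: "f \<in> borel_measurable (Pi\<^sub>M (insert i I) (\<lambda>_. M))"
    using f by auto
  have "(\<integral>z. f z \<partial>Pi\<^sub>M (insert i I) (\<lambda>_. M)) = (\<integral>z. f z \<partial>Pi\<^sub>M ({i} \<union> I) (\<lambda>_. M))"
    by simp
  also have "\<dots> = (\<integral>x. (\<integral>z. f (merge {i} I (x, z)) \<partial>Pi\<^sub>M I (\<lambda>_. M)) \<partial>Pi\<^sub>M {i} (\<lambda>_. M))"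
    using assms f by (intro P.product_integral_fold) auto
  also have "\<dots> = (\<integral>x. (\<integral>z. f (z(i := x i)) \<partial>Pi\<^sub>M I (\<lambda>_. M)) \<partial>Pi\<^sub>M {i} (\<lambda>_. M))"
    using assms(2)
    by (intro Bochner_Integration.integral_cong refl arg_cong[where f=f])
       (auto simp: merge_def space_PiM PiE_def extensional_def fun_eq_iff)
  also have "\<dots> = (\<integral>y. (\<integral>z. f (z(i := y)) \<partial>Pi\<^sub>M I (\<lambda>_. M)) \<partial>M)"
  proof (rule P.product_integral_singleton)
    have "(\<lambda>(y, z). f (z(i := y))) \<in> borel_measurable (M \<Otimes>\<^sub>M Pi\<^sub>M I (\<lambda>_. M))"
      by measurable
    then show "(\<lambda>y. \<integral>z. f (z(i := y)) \<partial>Pi\<^sub>M I (\<lambda>_. M)) \<in> borel_measurable M"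
      by (rule sigma_finite_measure.borel_measurable_lebesgue_integral[OF sf_I])
  qed
  finally show ?thesis .
qed

lemma (in prob_space) integrable_PiM_prod:
  fixes F :: "'i \<Rightarrow> 'a \<Rightarrow> real"
  assumes "finite K" "J \<subseteq> K" and F: "\<And>j. j \<in> J \<Longrightarrow> integrable M (F j)"
  shows "integrable (Pi\<^sub>M K (\<lambda>_. M)) (\<lambda>z. \<Prod>j\<in>J. F j (z j))"
proof -
  interpret P: product_prob_space "\<lambda>_. M" by unfold_locales
  have J: "finite J" using assms finite_subset by blast
  have integrable_J: "integrable (Pi\<^sub>M J (\<lambda>_. M)) (\<lambda>z. \<Prod>j\<in>J. F j (z j))"
    using J F by (rule P.product_integrable_prod)
  then have "integrable (distr (Pi\<^sub>M K (\<lambda>_. M)) (Pi\<^sub>M J (\<lambda>_. M)) (\<lambda>z. restrict z J)) (\<lambda>z. \<Prod>j\<in>J. F j (z j))"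
    using P.distr_restrict[OF assms(2,1)] by simp
  then have "integrable (Pi\<^sub>M K (\<lambda>_. M)) (\<lambda>z. \<Prod>j\<in>J. F j (restrict z J j))"
    using assms(2) integrable_J
    by (subst (asm) integrable_distr_eq) (auto intro!: measurable_restrict_subset)
  then show ?thesis by simp
qed

lemma (in prob_space) integral_PiM_prod:
  fixes F :: "'i \<Rightarrow> 'a \<Rightarrow> real"
  assumes "finite K" "J \<subseteq> K" and F: "\<And>j. j \<in> J \<Longrightarrow> integrable M (F j)"
  shows "(\<integral>z. (\<Prod>j\<in>J. F j (z j)) \<partial>Pi\<^sub>M K (\<lambda>_. M)) = (\<Prod>j\<in>J. integral\<^sup>L M (F j))"
proof -
  interpret P: product_prob_space "\<lambda>_. M" by unfold_locales
  have J: "finite J" using assms finite_subset by blast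
  have "(\<lambda>z. \<Prod>j\<in>J. F j (z j)) \<in> borel_measurable (Pi\<^sub>M J (\<lambda>_. M))"
    using P.product_integrable_prod[OF J F] by auto
  then have "(\<integral>z. (\<Prod>j\<in>J. F j (z j)) \<partial>Pi\<^sub>M K (\<lambda>_. M)) = (\<integral>z. (\<Prod>j\<in>J. F j (z j)) \<partial>Pi\<^sub>M J (\<lambda>_. M))"
    using assms(1,2) by (intro integral_PiM_restrict[symmetric]) (auto intro!: prod.cong)
  also have "\<dots> = (\<Prod>j\<in>J. integral\<^sup>L M (F j))"
    using J F by (rule P.product_integral_prod)
  finally show ?thesis .
qed

lemma (in prob_space) integral_PiM_pos:
  fixes f :: "('i \<Rightarrow> 'a) \<Rightarrow> real"
  assumes "finite K" and A: "A \<in> sets M" "emeasure M A \<noteq> 0"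
    and f: "integrable (Pi\<^sub>M K (\<lambda>_. M)) f" "\<And>z. z \<in> space (Pi\<^sub>M K (\<lambda>_. M)) \<Longrightarrow> 0 \<le> f z"
    and f_pos: "\<And>z. z \<in> space (Pi\<^sub>M K (\<lambda>_. M)) \<Longrightarrow> (\<forall>i\<in>K. z i \<in> A) \<Longrightarrow> 0 < f z"
  shows "0 < (\<integral>z. f z \<partial>Pi\<^sub>M K (\<lambda>_. M))"
proof -
  interpret P: product_prob_space "\<lambda>_. M" by unfold_locales
  have B: "(\<Pi>\<^sub>E i\<in>K. A) \<in> sets (Pi\<^sub>M K (\<lambda>_. M))"
    using assms(1) A by (auto intro!: sets_PiM_I_finite)
  have "emeasure (Pi\<^sub>M K (\<lambda>_. M)) (\<Pi>\<^sub>E i\<in>K. A) = (\<Prod>i\<in>K. emeasure M A)"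
    using assms(1) A by (intro P.emeasure_PiM) auto
  then have B_pos: "emeasure (Pi\<^sub>M K (\<lambda>_. M)) (\<Pi>\<^sub>E i\<in>K. A) \<noteq> 0"
    using assms(1) A by simp
  have "integral\<^sup>L (Pi\<^sub>M K (\<lambda>_. M)) f \<noteq> 0"
  proof
    assume "integral\<^sup>L (Pi\<^sub>M K (\<lambda>_. M)) f = 0"
    then have "AE z in Pi\<^sub>M K (\<lambda>_. M). f z = 0"
      using f by (subst integral_nonneg_eq_0_iff_AE[symmetric]) (auto intro: AE_I2)
    then have "AE z in Pi\<^sub>M K (\<lambda>_. M). z \<notin> (\<Pi>\<^sub>E i\<in>K. A)"
      by (rule AE_mp[OF _ AE_I2]) (use f_pos in \<open>fastforce simp: PiE_iff\<close>)
    then show False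
      using B_pos AE_iff_measurable[OF B, of "\<lambda>z. z \<notin> (\<Pi>\<^sub>E i\<in>K. A)"] sets.sets_into_space[OF B]
      by auto
  qed
  moreover have "0 \<le> integral\<^sup>L (Pi\<^sub>M K (\<lambda>_. M)) f"
    using f by (intro integral_nonneg_AE AE_I2) auto
  ultimately show ?thesis by simp
qed

lemma integral_sum_eq_card_mult:
  fixes f :: "'i \<Rightarrow> 'a \<Rightarrow> real"
  assumes "\<And>j. j \<in> J \<Longrightarrow> integrable M (f j)"
    and "\<And>j. j \<in> J \<Longrightarrow> (\<integral>z. f j z \<partial>M) = (\<integral>z. f k z \<partial>M)"
  shows "(\<integral>z. (\<Sum>j\<in>J. f j z) \<partial>M) = card J * (\<integral>z. f k z \<partial>M)"
  using assms by (simp add: Bochner_Integration.integral_sum)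

section \<open>Normalized importance weights and their i.i.d. samples\<close>

lemma inverse_square_ge_tangent:
  fixes t t0 :: real
  assumes "0 < t" "0 < t0"
  shows "1 / t0\<^sup>2 - 2 / t0 ^ 3 * (t - t0) \<le> 1 / t\<^sup>2"
proof -
  have "(3 * t0 - 2 * t) * t\<^sup>2 = t0 ^ 3 - (t0 - t)\<^sup>2 * (t0 + 2 * t)"
    by (simp add: power2_eq_square power3_eq_cube algebra_simps)
  also have "\<dots> \<le> t0 ^ 3"
    using assms by simp
  finally have key: "(3 * t0 - 2 * t) * t\<^sup>2 \<le> t0 ^ 3" .
  have "1 / t0\<^sup>2 - 2 / t0 ^ 3 * (t - t0) = (3 * t0 - 2 * t) / t0 ^ 3"
    using assms by (simp add: field_simps power2_eq_square power3_eq_cube)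
  also have "\<dots> \<le> 1 / t\<^sup>2"
    using key assms by (simp add: divide_simps)
  finally show ?thesis .
qed

lemma frac_shift_le_self:
  fixes a c s :: real
  assumes "0 \<le> a" "a \<le> s" "0 \<le> c"
  shows "a\<^sup>2 * c / ((s + c) * s) \<le> a"
proof (cases "a = 0")
  case False
  with assms have "a * (a / s) * (c / (s + c)) \<le> a * 1 * 1"
    by (intro mult_mono) auto
  then show ?thesis by (simp add: power2_eq_square mult.commute)
qed simp

lemma frac_shift_le:
  fixes a b c s :: real
  assumes "0 \<le> a" "a \<le> s" "0 \<le> b" "0 \<le> c"
  shows "a\<^sup>2 * c / ((s + b + c) * (s + b)) \<le> a\<^sup>2 * c / ((s + c) * s)"
proof (cases "a = 0")
  case False
  with assms have "0 < s" by simp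
  with assms show ?thesis by (intro divide_left_mono mult_mono mult_pos_pos) auto
qed simp

lemma frac_shift_less:
  fixes a b c s :: real
  assumes "0 < a" "a \<le> s" "0 < b" "0 < c"
  shows "a\<^sup>2 * c / ((s + b + c) * (s + b)) < a\<^sup>2 * c / ((s + c) * s)"
proof -
  from assms have "0 < s" by simp
  with assms show ?thesis by (intro divide_strict_left_mono mult_strict_mono mult_pos_pos) auto
qed

locale importance_weight = prob_space Q for Q :: "'a measure" +
  fixes w :: "'a \<Rightarrow> real"
  assumes weight_nonneg: "x \<in> space Q \<Longrightarrow> 0 \<le> w x"
    and integral_weight: "integral\<^sup>L Q w = 1"
begin

lemma integrable_weight: "integrable Q w"
  using integral_weight not_integrable_integral_eq by fastforce

lemma weight_measurable[measurable]: "w \<in> borel_measurable Q"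
  using integrable_weight by auto

lemma emeasure_weight_pos: "emeasure Q {x \<in> space Q. 0 < w x} \<noteq> 0"
proof
  assume "emeasure Q {x \<in> space Q. 0 < w x} = 0"
  then have "AE x in Q. \<not> 0 < w x"
    by (subst AE_iff_measurable[OF _ refl]) auto
  then have "AE x in Q. w x = 0"
    by (rule AE_mp[OF _ AE_I2]) (use weight_nonneg in force)
  then have "integral\<^sup>L Q w = 0" by (rule integral_eq_zero_AE)
  then show False using integral_weight by simp
qed

lemma weight_bound_ge_1:
  assumes "\<And>x. x \<in> space Q \<Longrightarrow> w x \<le> B"
  shows "1 \<le> B"
proof -
  have "integral\<^sup>L Q w \<le> integral\<^sup>L Q (\<lambda>_. B)"
    using assms integrable_weight by (intro integral_mono) auto
  then show ?thesis by (simp add: integral_weight prob_space)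
qed

lemma integrable_weight_square:
  assumes "\<And>x. x \<in> space Q \<Longrightarrow> w x \<le> B"
  shows "integrable Q (\<lambda>x. (w x)\<^sup>2)"
  using assms weight_nonneg
  by (intro integrable_const_bound[where B="B\<^sup>2"] AE_I2) (auto intro: power_mono)

lemma second_moment_ge_1:
  assumes "integrable Q (\<lambda>x. (w x)\<^sup>2)"
  shows "1 \<le> (\<integral>x. (w x)\<^sup>2 \<partial>Q)"
  using variance_eq[OF integrable_weight assms] variance_positive[of w]
  by (simp add: integral_weight)

lemma second_moment_le:
  assumes B: "\<And>x. x \<in> space Q \<Longrightarrow> w x \<le> B"
  shows "(\<integral>x. (w x)\<^sup>2 \<partial>Q) \<le> B"
proof -
  have "(\<integral>x. (w x)\<^sup>2 \<partial>Q) \<le> (\<integral>x. B * w x \<partial>Q)"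
    using integrable_weight_square[OF B] integrable_weight weight_nonneg B
    by (intro integral_mono) (auto simp: power2_eq_square intro: mult_right_mono)
  then show ?thesis by (simp add: integral_weight)
qed

abbreviation sample :: "nat set \<Rightarrow> (nat \<Rightarrow> 'a) measure" where
  "sample K \<equiv> Pi\<^sub>M K (\<lambda>_. Q)"

text \<open>Samples are indexed from 1. In the notation of the proof idea, \<^term>\<open>wsum n\<close> is S_n,
  the expectation of \<^term>\<open>ratio n\<close> is eps(n) and that of \<^term>\<open>decrement n\<close> is
  eps(n) - eps(n+1).\<close>

definition wsum :: "nat \<Rightarrow> (nat \<Rightarrow> 'a) \<Rightarrow> real" where
  "wsum n z = (\<Sum>i\<in>{1..n}. w (z i))"

definition share :: "nat \<Rightarrow> nat \<Rightarrow> (nat \<Rightarrow> 'a) \<Rightarrow> real" where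
  "share n j z = w (z j) / wsum n z"

definition ratio :: "nat \<Rightarrow> (nat \<Rightarrow> 'a) \<Rightarrow> real" where
  "ratio n z = (w (z 1))\<^sup>2 / wsum n z"

definition decrement :: "nat \<Rightarrow> (nat \<Rightarrow> 'a) \<Rightarrow> real" where
  "decrement n z = (w (z 1))\<^sup>2 * w (z (Suc n)) / (wsum (Suc n) z * wsum n z)"

lemma prob_space_sample: "prob_space (sample K)"
  by (simp add: prob_space_PiM prob_space_axioms)

lemma weight_sample_nonneg: "z \<in> space (sample K) \<Longrightarrow> i \<in> K \<Longrightarrow> 0 \<le> w (z i)"
  by (auto simp: space_PiM intro!: weight_nonneg)

lemma sample_component_space: "z \<in> space (sample K) \<Longrightarrow> i \<in> K \<Longrightarrow> z i \<in> space Q"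
  by (auto simp: space_PiM)

lemma wsum_nonneg: "z \<in> space (sample K) \<Longrightarrow> {1..n} \<subseteq> K \<Longrightarrow> 0 \<le> wsum n z"
  unfolding wsum_def by (auto intro!: sum_nonneg weight_sample_nonneg)

lemma weight_le_wsum:
  "z \<in> space (sample K) \<Longrightarrow> {1..n} \<subseteq> K \<Longrightarrow> i \<in> {1..n} \<Longrightarrow> w (z i) \<le> wsum n z"
  unfolding wsum_def by (rule member_le_sum) (auto intro!: weight_sample_nonneg)

lemma wsum_Suc: "wsum (Suc n) z = wsum n z + w (z (Suc n))"
  by (simp add: wsum_def)

lemma wsum_restrict: "{1..n} \<subseteq> J \<Longrightarrow> wsum n (restrict z J) = wsum n z"
  unfolding wsum_def by (auto intro!: sum.cong)

lemma wsum_transpose: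
  assumes "i \<in> {1..n}" "j \<in> {1..n}" "{1..n} \<subseteq> K"
  shows "wsum n (\<lambda>l\<in>K. z (Transposition.transpose i j l)) = wsum n z"
proof -
  have "wsum n (\<lambda>l\<in>K. z (Transposition.transpose i j l)) = (\<Sum>l\<in>{1..n}. w (z (Transposition.transpose i j l)))"
    using assms(3) unfolding wsum_def by (intro sum.cong) auto
  also have "\<dots> = wsum n z"
    unfolding wsum_def using sum.permute[OF permutes_swap_id[OF assms(1,2)], of "\<lambda>l. w (z l)"]
    by (simp add: comp_def)
  finally show ?thesis .
qed

lemma share_bounds:
  assumes "z \<in> space (sample K)" "{1..n} \<subseteq> K" "j \<in> {1..n}"
  shows "0 \<le> share n j z" "share n j z \<le> 1"
proof -
  have "0 \<le> w (z j)" "w (z j) \<le> wsum n z"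
    using assms weight_sample_nonneg[OF assms(1)] weight_le_wsum[OF assms] by auto
  then show "0 \<le> share n j z" "share n j z \<le> 1"
    by (auto simp: share_def divide_le_eq_1)
qed

lemma sum_share_le_1: "(\<Sum>j\<in>{1..n}. share n j z) \<le> 1"
  unfolding share_def sum_divide_distrib[symmetric] wsum_def[symmetric] by simp

lemma share_transpose:
  assumes "i \<in> {1..n}" "j \<in> {1..n}" "{1..n} \<subseteq> K" "k \<in> K"
  shows "share n k (\<lambda>l\<in>K. z (Transposition.transpose i j l)) = share n (Transposition.transpose i j k) z"
  using assms by (simp add: share_def wsum_transpose)

lemma ratio_eq_share: "ratio n z = w (z 1) * share n 1 z"
  by (simp add: ratio_def share_def power2_eq_square)

lemma decrement_eq_share: "decrement n z = w (z 1) * (share n 1 z * share (Suc n) (Suc n) z)"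
  by (simp add: decrement_def share_def power2_eq_square mult_ac)

lemma weight_component_measurable: "i \<in> K \<Longrightarrow> (\<lambda>z. w (z i)) \<in> borel_measurable (sample K)"
  by measurable

lemma wsum_measurable: "{1..n} \<subseteq> K \<Longrightarrow> wsum n \<in> borel_measurable (sample K)"
  unfolding wsum_def by (intro borel_measurable_sum weight_component_measurable) auto

lemma share_measurable: "{1..n} \<subseteq> K \<Longrightarrow> j \<in> K \<Longrightarrow> share n j \<in> borel_measurable (sample K)"
  unfolding share_def by (intro borel_measurable_divide weight_component_measurable wsum_measurable)

lemma ratio_measurable: "{1..n} \<subseteq> K \<Longrightarrow> 1 \<le> n \<Longrightarrow> ratio n \<in> borel_measurable (sample K)"
  unfolding ratio_eq_share[abs_def]
  by (intro borel_measurable_times weight_component_measurable share_measurable) auto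

lemma decrement_measurable: "{1..Suc n} \<subseteq> K \<Longrightarrow> decrement n \<in> borel_measurable (sample K)"
  unfolding decrement_eq_share[abs_def]
  by (intro borel_measurable_times weight_component_measurable share_measurable) auto

lemma integrable_weight_component: "i \<in> K \<Longrightarrow> integrable (sample K) (\<lambda>z. w (z i))"
  using distr_PiM_component[of K "\<lambda>_. Q" i] prob_space_axioms integrable_weight
  by (subst integrable_distr_eq[symmetric]) auto

lemma integrable_dominated_by_weight:
  fixes f :: "(nat \<Rightarrow> 'a) \<Rightarrow> real"
  assumes "i \<in> K" "f \<in> borel_measurable (sample K)"
    and "\<And>z. z \<in> space (sample K) \<Longrightarrow> \<bar>f z\<bar> \<le> w (z i)"
  shows "integrable (sample K) f"
  using assms weight_sample_nonneg[of _ K i]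
  by (intro Bochner_Integration.integrable_bound[OF integrable_weight_component]) (auto intro!: AE_I2)

lemma integrable_bounded:
  fixes f :: "(nat \<Rightarrow> 'a) \<Rightarrow> real"
  assumes "f \<in> borel_measurable (sample K)" "\<And>z. z \<in> space (sample K) \<Longrightarrow> \<bar>f z\<bar> \<le> B"
  shows "integrable (sample K) f"
proof -
  interpret S: prob_space "sample K" by (rule prob_space_sample)
  show ?thesis using assms by (intro S.integrable_const_bound[where B=B]) (auto intro!: AE_I2)
qed

lemma integral_sample_restrict:
  fixes f :: "(nat \<Rightarrow> 'a) \<Rightarrow> real"
  assumes "finite K" "{1..m} \<subseteq> K" "f \<in> borel_measurable (sample {1..m})"
    and "\<And>z. f (restrict z {1..m}) = f z"
  shows "(\<integral>z. f z \<partial>sample {1..m}) = (\<integral>z. f z \<partial>sample K)"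
  by (rule integral_PiM_restrict[OF assms(1,2,3)]) (rule assms(4))

lemma integral_sample_transpose:
  fixes f g :: "(nat \<Rightarrow> 'a) \<Rightarrow> real"
  assumes "i \<in> K" "j \<in> K" "f \<in> borel_measurable (sample K)"
    and "\<And>z. z \<in> space (sample K) \<Longrightarrow> f (\<lambda>l\<in>K. z (Transposition.transpose i j l)) = g z"
  shows "(\<integral>z. g z \<partial>sample K) = (\<integral>z. f z \<partial>sample K)"
proof -
  have "(\<integral>z. g z \<partial>sample K) = (\<integral>z. f (\<lambda>l\<in>K. z (Transposition.transpose i j l)) \<partial>sample K)"
    using assms(4) by (intro Bochner_Integration.integral_cong) auto
  also have "\<dots> = (\<integral>z. f z \<partial>sample K)"
    using assms(1-3) by (intro integral_PiM_reindex permutes_swap_id)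
  finally show ?thesis .
qed

lemma decrement_bounds:
  assumes z: "z \<in> space (sample K)" and K: "{1..Suc n} \<subseteq> K" and n: "1 \<le> n"
  shows "0 \<le> decrement n z" "decrement n z \<le> w (z 1)"
proof -
  have "0 \<le> w (z 1)" using weight_sample_nonneg[OF z] K by auto
  moreover have "{1..n} \<subseteq> K" using K by auto
  then have "0 \<le> share n 1 z" "share n 1 z \<le> 1"
    using share_bounds[OF z, of n 1] n by auto
  moreover have "0 \<le> share (Suc n) (Suc n) z" "share (Suc n) (Suc n) z \<le> 1"
    using share_bounds[OF z K, of "Suc n"] by auto
  ultimately show "0 \<le> decrement n z" "decrement n z \<le> w (z 1)"
    unfolding decrement_eq_share by (auto intro!: mult_left_le mult_le_one)
qed

lemma integrable_ratio:
  assumes "{1..n} \<subseteq> K" "1 \<le> n"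
  shows "integrable (sample K) (ratio n)"
proof (rule integrable_dominated_by_weight[of 1])
  show "1 \<in> K" "ratio n \<in> borel_measurable (sample K)"
    using assms ratio_measurable[OF assms] by auto
  fix z assume z: "z \<in> space (sample K)"
  have "0 \<le> w (z 1)" using weight_sample_nonneg[OF z] assms by auto
  then show "\<bar>ratio n z\<bar> \<le> w (z 1)"
    using share_bounds[OF z assms(1), of 1] assms unfolding ratio_eq_share
    by (auto simp: abs_mult intro: mult_left_le)
qed

lemma integrable_decrement:
  assumes "{1..Suc n} \<subseteq> K" "1 \<le> n"
  shows "integrable (sample K) (decrement n)"
proof (rule integrable_dominated_by_weight[of 1])
  show "1 \<in> K" "decrement n \<in> borel_measurable (sample K)"
    using assms decrement_measurable[OF assms(1)] by auto
  show "\<bar>decrement n z\<bar> \<le> w (z 1)" if "z \<in> space (sample K)" for z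
    using decrement_bounds[OF that assms] by simp
qed

lemma ratio_Suc_diff:
  assumes z: "z \<in> space (sample K)" and K: "{1..Suc n} \<subseteq> K" and n: "1 \<le> n"
  shows "ratio (Suc n) z - ratio n z = - decrement n z"
proof (cases "wsum n z = 0")
  case False
  have "{1..n} \<subseteq> K" "Suc n \<in> K" using K by auto
  then have "0 \<le> wsum n z" "0 \<le> w (z (Suc n))"
    using wsum_nonneg[OF z] weight_sample_nonneg[OF z] by auto
  with False have "0 < wsum n z" "0 < wsum n z + w (z (Suc n))" by auto
  then show ?thesis by (simp add: ratio_def decrement_def wsum_Suc field_simps)
next
  case True
  then have "w (z 1) = 0"
    using weight_sample_nonneg[OF z] weight_le_wsum[OF z, of n 1] K n by fastforce
  then show ?thesis by (simp add: ratio_def decrement_def)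
qed

lemma integral_ratio_Suc_diff:
  assumes "1 \<le> n"
  shows "(\<integral>z. ratio (Suc n) z \<partial>sample {1..Suc n}) - (\<integral>z. ratio n z \<partial>sample {1..n})
    = - (\<integral>z. decrement n z \<partial>sample {1..Suc n})"
proof -
  have "(\<integral>z. ratio n z \<partial>sample {1..n}) = (\<integral>z. ratio n z \<partial>sample {1..Suc n})"
    using assms by (intro integral_sample_restrict ratio_measurable) (auto simp: ratio_def wsum_restrict)
  moreover have "(\<integral>z. ratio (Suc n) z \<partial>sample {1..Suc n}) - (\<integral>z. ratio n z \<partial>sample {1..Suc n})
      = (\<integral>z. ratio (Suc n) z - ratio n z \<partial>sample {1..Suc n})"
    using assms by (intro Bochner_Integration.integral_diff[symmetric] integrable_ratio) auto
  moreover have "\<dots> = (\<integral>z. - decrement n z \<partial>sample {1..Suc n})"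
    using assms by (intro Bochner_Integration.integral_cong ratio_Suc_diff) auto
  ultimately show ?thesis by simp
qed

lemma integral_decrement_pos:
  assumes "1 \<le> n"
  shows "0 < (\<integral>z. decrement n z \<partial>sample {1..Suc n})"
proof (rule integral_PiM_pos[OF _ _ emeasure_weight_pos])
  show "integrable (sample {1..Suc n}) (decrement n)"
    using assms by (intro integrable_decrement) auto
  fix z assume z: "z \<in> space (sample {1..Suc n})"
  then show "0 \<le> decrement n z" using decrement_bounds(1)[OF z _ assms] by simp
  assume "\<forall>i\<in>{1..Suc n}. z i \<in> {x \<in> space Q. 0 < w x}"
  then have pos: "0 < w (z 1)" "0 < w (z (Suc n))" by auto
  moreover have "w (z 1) \<le> wsum n z"
    using assms by (intro weight_le_wsum[OF z]) auto
  ultimately show "0 < decrement n z"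
    by (auto simp: decrement_def wsum_Suc intro!: divide_pos_pos mult_pos_pos)
qed auto

text \<open>\<^term>\<open>decrement n\<close> with sample n+1 replaced by sample n+2.\<close>

definition swapped_decrement :: "nat \<Rightarrow> (nat \<Rightarrow> 'a) \<Rightarrow> real" where
  "swapped_decrement n z =
    (w (z 1))\<^sup>2 * w (z (Suc (Suc n))) / ((wsum n z + w (z (Suc (Suc n)))) * wsum n z)"

lemma integral_decrement_eq_swapped:
  assumes "1 \<le> n"
  shows "(\<integral>z. decrement n z \<partial>sample {1..Suc n}) = (\<integral>z. swapped_decrement n z \<partial>sample {1..Suc (Suc n)})"
proof -
  define K where "K = {1..Suc (Suc n)}"
  have K: "{1..n} \<subseteq> K" "{1..Suc n} \<subseteq> K" "Suc n \<in> K" "Suc (Suc n) \<in> K" "1 \<in> K"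
    by (auto simp: K_def)
  have "(\<integral>z. decrement n z \<partial>sample {1..Suc n}) = (\<integral>z. decrement n z \<partial>sample K)"
    using K by (intro integral_sample_restrict decrement_measurable)
      (auto simp: K_def decrement_def wsum_restrict)
  also have "\<dots> = (\<integral>z. swapped_decrement n z \<partial>sample K)"
  proof (rule integral_sample_transpose[symmetric, OF K(3,4) decrement_measurable[OF K(2)]])
    fix z
    have "wsum n (\<lambda>l\<in>K. z (Transposition.transpose (Suc n) (Suc (Suc n)) l)) = wsum n z"
      unfolding wsum_def using K(1) by (intro sum.cong) auto
    then show "decrement n (\<lambda>l\<in>K. z (Transposition.transpose (Suc n) (Suc (Suc n)) l))
        = swapped_decrement n z"
      using K assms by (simp add: decrement_def swapped_decrement_def wsum_Suc)
  qed
  finally show ?thesis by (simp add: K_def)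
qed

lemma integrable_swapped_decrement:
  assumes K: "{1..Suc (Suc n)} \<subseteq> K" and n: "1 \<le> n"
  shows "integrable (sample K) (swapped_decrement n)"
proof (rule integrable_dominated_by_weight[of 1])
  have K': "{1..n} \<subseteq> K" "1 \<in> K" "Suc (Suc n) \<in> K" using K by auto
  then show "1 \<in> K" "swapped_decrement n \<in> borel_measurable (sample K)"
    unfolding swapped_decrement_def
    by (auto intro!: borel_measurable_divide borel_measurable_times borel_measurable_add
        borel_measurable_power weight_component_measurable wsum_measurable)
  fix z assume z: "z \<in> space (sample K)"
  have "0 \<le> w (z 1)" "w (z 1) \<le> wsum n z" "0 \<le> w (z (Suc (Suc n)))"
    using weight_sample_nonneg[OF z] weight_le_wsum[OF z K'(1)] K' n by auto
  then show "\<bar>swapped_decrement n z\<bar> \<le> w (z 1)"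
    using frac_shift_le_self by (simp add: swapped_decrement_def)
qed

lemma integral_decrement_Suc_less:
  assumes n: "1 \<le> n"
  shows "(\<integral>z. decrement (Suc n) z \<partial>sample {1..Suc (Suc n)}) < (\<integral>z. decrement n z \<partial>sample {1..Suc n})"
proof -
  define K where "K = {1..Suc (Suc n)}"
  have K: "{1..n} \<subseteq> K" "1 \<in> K" "Suc n \<in> K" "Suc (Suc n) \<in> K"
    using n by (auto simp: K_def)
  have integrable: "integrable (sample K) (swapped_decrement n)" "integrable (sample K) (decrement (Suc n))"
    using n by (auto simp: K_def intro!: integrable_swapped_decrement integrable_decrement)
  have "0 < (\<integral>z. swapped_decrement n z - decrement (Suc n) z \<partial>sample K)"
  proof (rule integral_PiM_pos[OF _ _ emeasure_weight_pos])
    show "integrable (sample K) (\<lambda>z. swapped_decrement n z - decrement (Suc n) z)"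
      using integrable by simp
    fix z assume z: "z \<in> space (sample K)"
    have weights: "0 \<le> w (z 1)" "w (z 1) \<le> wsum n z" "0 \<le> w (z (Suc n))" "0 \<le> w (z (Suc (Suc n)))"
      using weight_sample_nonneg[OF z] weight_le_wsum[OF z K(1)] K n by auto
    have decrement_Suc: "decrement (Suc n) z = (w (z 1))\<^sup>2 * w (z (Suc (Suc n))) /
        ((wsum n z + w (z (Suc n)) + w (z (Suc (Suc n)))) * (wsum n z + w (z (Suc n))))"
      by (simp add: decrement_def wsum_Suc)
    show "0 \<le> swapped_decrement n z - decrement (Suc n) z"
      using frac_shift_le[OF weights] by (simp add: decrement_Suc swapped_decrement_def)
    assume "\<forall>i\<in>K. z i \<in> {x \<in> space Q. 0 < w x}"
    then have "0 < w (z 1)" "0 < w (z (Suc n))" "0 < w (z (Suc (Suc n)))" using K by auto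
    then show "0 < swapped_decrement n z - decrement (Suc n) z"
      using frac_shift_less[OF _ weights(2)] by (simp add: decrement_Suc swapped_decrement_def)
  qed (auto simp: K_def)
  also have "\<dots> = (\<integral>z. swapped_decrement n z \<partial>sample K) - (\<integral>z. decrement (Suc n) z \<partial>sample K)"
    using integrable by (rule Bochner_Integration.integral_diff)
  finally show ?thesis
    using integral_decrement_eq_swapped[OF n] by (simp add: K_def)
qed

lemma integral_decrement_strict_antimono:
  assumes "1 \<le> m" "m < n"
  shows "(\<integral>z. decrement n z \<partial>sample {1..Suc n}) < (\<integral>z. decrement m z \<partial>sample {1..Suc m})"
  using assms(2)
proof (induction n)
  case (Suc n)
  show ?case
  proof (cases "m = n")
    case False
    with Suc have "(\<integral>z. decrement n z \<partial>sample {1..Suc n}) < (\<integral>z. decrement m z \<partial>sample {1..Suc m})"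
      by simp
    with Suc assms(1) show ?thesis
      using integral_decrement_Suc_less[of n] by simp
  qed (use assms(1) integral_decrement_Suc_less in simp)
qed simp

lemma integrable_share:
  assumes "{1..n} \<subseteq> K" "j \<in> {1..n}"
  shows "integrable (sample K) (share n j)"
proof (rule integrable_bounded[of _ _ 1])
  show "share n j \<in> borel_measurable (sample K)"
    using assms by (intro share_measurable) auto
  show "\<bar>share n j z\<bar> \<le> 1" if "z \<in> space (sample K)" for z
    using share_bounds[OF that assms] by simp
qed

lemma integrable_share_product:
  assumes K: "{1..Suc n} \<subseteq> K" and j: "j \<in> {1..n}"
  shows "integrable (sample K) (\<lambda>z. share n j z * share (Suc n) (Suc n) z)"
proof (rule integrable_bounded[of _ _ 1])
  have K': "{1..n} \<subseteq> K" "j \<in> K" "Suc n \<in> K" using K j by auto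
  then show "(\<lambda>z. share n j z * share (Suc n) (Suc n) z) \<in> borel_measurable (sample K)"
    using K by (intro borel_measurable_times share_measurable) auto
  show "\<bar>share n j z * share (Suc n) (Suc n) z\<bar> \<le> 1" if "z \<in> space (sample K)" for z
    using share_bounds[OF that K'(1) j] share_bounds[OF that K, of "Suc n"]
    by (auto simp: abs_mult intro: mult_le_one)
qed

lemma integral_share_le:
  assumes n: "1 \<le> n"
  shows "(\<integral>z. share n n z \<partial>sample {1..n}) \<le> 1 / n"
proof -
  define K where "K = {1..n}"
  interpret S: prob_space "sample K" by (rule prob_space_sample)
  have share_integrable: "integrable (sample K) (share n j)" if "j \<in> K" for j
    using that by (intro integrable_share) (auto simp: K_def)
  have share_eq: "(\<integral>z. share n j z \<partial>sample K) = (\<integral>z. share n n z \<partial>sample K)" if j: "j \<in> K" for j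
  proof (rule integral_sample_transpose[OF j _ share_measurable])
    fix z
    have "share n n (\<lambda>l\<in>K. z (Transposition.transpose j n l)) = share n (Transposition.transpose j n n) z"
      using j n by (intro share_transpose) (auto simp: K_def)
    then show "share n n (\<lambda>l\<in>K. z (Transposition.transpose j n l)) = share n j z"
      by simp
  qed (use n in \<open>auto simp: K_def\<close>)
  have "(\<integral>z. (\<Sum>j\<in>K. share n j z) \<partial>sample K) = card K * (\<integral>z. share n n z \<partial>sample K)"
    by (rule integral_sum_eq_card_mult[where f="share n" and k=n, OF share_integrable share_eq])
  then have "real n * (\<integral>z. share n n z \<partial>sample K) = (\<integral>z. (\<Sum>j\<in>K. share n j z) \<partial>sample K)"
    by (simp add: K_def)
  also have "\<dots> \<le> (\<integral>z. 1 \<partial>sample K)"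
  proof (rule integral_mono)
    show "integrable (sample K) (\<lambda>z. \<Sum>j\<in>K. share n j z)"
      using share_integrable by auto
    show "integrable (sample K) (\<lambda>z. 1)"
      by (rule S.integrable_const)
    show "(\<Sum>j\<in>K. share n j z) \<le> 1" for z
      unfolding K_def by (rule sum_share_le_1)
  qed
  also have "\<dots> = 1"
    by (simp add: S.prob_space)
  finally show ?thesis
    using n by (simp add: K_def field_simps)
qed

lemma integral_share_product_transpose:
  assumes j: "j \<in> {1..n}"
  shows "(\<integral>z. share n j z * share (Suc n) (Suc n) z \<partial>sample {1..Suc n})
    = (\<integral>z. share n 1 z * share (Suc n) (Suc n) z \<partial>sample {1..Suc n})"
proof (rule integral_sample_transpose)
  define K where "K = {1..Suc n}"
  have K: "{1..n} \<subseteq> K" "{1..Suc n} \<subseteq> K" "Suc n \<in> K" "1 \<in> K" "j \<in> K"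
    using j by (auto simp: K_def)
  show "1 \<in> {1..Suc n}" "j \<in> {1..Suc n}" using K by (auto simp: K_def)
  show "(\<lambda>z. share n 1 z * share (Suc n) (Suc n) z) \<in> borel_measurable (sample {1..Suc n})"
    using K by (intro borel_measurable_times share_measurable) (auto simp: K_def)
  fix z
  have "share n 1 (\<lambda>l\<in>K. z (Transposition.transpose 1 j l)) = share n j z"
    using share_transpose[of 1 n j K 1 z] j K by auto
  moreover have "share (Suc n) (Suc n) (\<lambda>l\<in>K. z (Transposition.transpose 1 j l))
      = share (Suc n) (Suc n) z"
    using share_transpose[of 1 "Suc n" j K "Suc n" z] j K by auto
  ultimately show "share n 1 (\<lambda>l\<in>{1..Suc n}. z (Transposition.transpose 1 j l)) *
      share (Suc n) (Suc n) (\<lambda>l\<in>{1..Suc n}. z (Transposition.transpose 1 j l))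
      = share n j z * share (Suc n) (Suc n) z"
    by (simp add: K_def)
qed

lemma integral_share_product_le:
  assumes n: "1 \<le> n"
  shows "(\<integral>z. share n 1 z * share (Suc n) (Suc n) z \<partial>sample {1..Suc n}) \<le> 1 / (real n * (real n + 1))"
proof -
  define K where "K = {1..Suc n}"
  define f where "f j z = share n j z * share (Suc n) (Suc n) z" for j z
  have K: "{1..Suc n} \<subseteq> K" by (simp add: K_def)
  have f_integrable: "integrable (sample K) (f j)" if "j \<in> {1..n}" for j
    unfolding f_def using K that by (rule integrable_share_product)
  have f_eq: "(\<integral>z. f j z \<partial>sample K) = (\<integral>z. f 1 z \<partial>sample K)" if "j \<in> {1..n}" for j
    unfolding K_def f_def using that by (rule integral_share_product_transpose)
  have "(\<integral>z. (\<Sum>j\<in>{1..n}. f j z) \<partial>sample K) = card {1..n} * (\<integral>z. f 1 z \<partial>sample K)"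
    by (rule integral_sum_eq_card_mult[where f=f and k=1, OF f_integrable f_eq])
  then have "real n * (\<integral>z. f 1 z \<partial>sample K) = (\<integral>z. (\<Sum>j\<in>{1..n}. f j z) \<partial>sample K)"
    by simp
  also have "\<dots> \<le> (\<integral>z. share (Suc n) (Suc n) z \<partial>sample K)"
  proof (rule integral_mono)
    show "integrable (sample K) (\<lambda>z. \<Sum>j\<in>{1..n}. f j z)"
      using f_integrable by auto
    show "integrable (sample K) (share (Suc n) (Suc n))"
      using K by (intro integrable_share) auto
    fix z assume z: "z \<in> space (sample K)"
    show "(\<Sum>j\<in>{1..n}. f j z) \<le> share (Suc n) (Suc n) z"
      unfolding f_def sum_distrib_right[symmetric]
      using mult_right_mono[OF sum_share_le_1 share_bounds(1)[OF z K, of "Suc n"]] by simp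
  qed
  also have "\<dots> \<le> 1 / (real n + 1)"
    using integral_share_le[of "Suc n"] by (simp add: K_def add.commute)
  finally have "(\<integral>z. f 1 z \<partial>sample K) * real n \<le> 1 / (real n + 1)"
    by (simp add: mult.commute)
  then have "(\<integral>z. f 1 z \<partial>sample K) \<le> 1 / (real n + 1) / real n"
    using n by (simp add: pos_le_divide_eq mult_ac)
  then show ?thesis by (simp add: K_def f_def mult.commute)
qed

lemma integral_decrement_le:
  assumes n: "1 \<le> n" and B: "\<And>x. x \<in> space Q \<Longrightarrow> w x \<le> B"
  shows "(\<integral>z. decrement n z \<partial>sample {1..Suc n}) \<le> B / (real n * (real n + 1))"
proof -
  define K where "K = {1..Suc n}"
  have K: "{1..n} \<subseteq> K" "{1..Suc n} \<subseteq> K" "1 \<in> K" using n by (auto simp: K_def)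
  have "(\<integral>z. decrement n z \<partial>sample K) \<le> (\<integral>z. B * (share n 1 z * share (Suc n) (Suc n) z) \<partial>sample K)"
  proof (rule integral_mono)
    show "integrable (sample K) (decrement n)"
      using K n by (intro integrable_decrement)
    show "integrable (sample K) (\<lambda>z. B * (share n 1 z * share (Suc n) (Suc n) z))"
      using integrable_share_product[OF K(2), of 1] n by simp
    fix z assume z: "z \<in> space (sample K)"
    have "0 \<le> share n 1 z * share (Suc n) (Suc n) z"
      using share_bounds(1)[OF z K(1), of 1] share_bounds(1)[OF z K(2), of "Suc n"] n by simp
    then show "decrement n z \<le> B * (share n 1 z * share (Suc n) (Suc n) z)"
      unfolding decrement_eq_share using B[OF sample_component_space[OF z K(3)]]
      by (rule mult_right_mono[rotated])
  qed
  also have "\<dots> = B * (\<integral>z. share n 1 z * share (Suc n) (Suc n) z \<partial>sample K)"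
    by simp
  also have "\<dots> \<le> B * (1 / (real n * (real n + 1)))"
    using integral_share_product_le[OF n] weight_bound_ge_1[OF B]
    by (intro mult_left_mono) (auto simp: K_def)
  finally show ?thesis by (simp add: K_def)
qed

lemma decrement_ge_tangent:
  assumes z: "z \<in> space (sample K)" and K: "{1..Suc n} \<subseteq> K" and n: "1 \<le> n"
    and B: "\<And>x. x \<in> space Q \<Longrightarrow> w x \<le> B" and t0: "0 < t0"
  shows "(w (z 1))\<^sup>2 * w (z (Suc n)) *
      (1 / t0\<^sup>2 - 2 / t0 ^ 3 * (2 * B + (\<Sum>i\<in>{2..n}. w (z i)) - t0)) \<le> decrement n z"
proof -
  define R where "R = (\<Sum>i\<in>{2..n}. w (z i))"
  have K': "1 \<in> K" "Suc n \<in> K" using K by auto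
  have "0 \<le> R" unfolding R_def using K by (intro sum_nonneg weight_sample_nonneg[OF z]) auto
  have wsum_eq: "wsum n z = w (z 1) + R"
    unfolding R_def wsum_def using n by (simp add: sum.atLeast_Suc_atMost numeral_2_eq_2)
  show ?thesis
  proof (cases "w (z 1) = 0 \<or> w (z (Suc n)) = 0")
    case True
    then show ?thesis using decrement_bounds(1)[OF z K n] by auto
  next
    case False
    then have pos: "0 < w (z 1)" "0 < w (z (Suc n))"
      using weight_sample_nonneg[OF z] K' by (auto simp: order.order_iff_strict)
    have "0 < wsum n z" "wsum n z \<le> wsum (Suc n) z" "wsum (Suc n) z \<le> 2 * B + R"
      using pos \<open>0 \<le> R\<close> B[OF sample_component_space[OF z K'(1)]]
        B[OF sample_component_space[OF z K'(2)]]
      by (auto simp: wsum_eq wsum_Suc)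
    then have "1 / (2 * B + R)\<^sup>2 \<le> 1 / (wsum (Suc n) z * wsum n z)"
      by (auto simp: power2_eq_square intro!: divide_left_mono mult_mono)
    moreover have "1 / t0\<^sup>2 - 2 / t0 ^ 3 * (2 * B + R - t0) \<le> 1 / (2 * B + R)\<^sup>2"
      using \<open>0 < wsum n z\<close> \<open>wsum n z \<le> wsum (Suc n) z\<close> \<open>wsum (Suc n) z \<le> 2 * B + R\<close> t0
      by (intro inverse_square_ge_tangent) auto
    ultimately have "(w (z 1))\<^sup>2 * w (z (Suc n)) * (1 / t0\<^sup>2 - 2 / t0 ^ 3 * (2 * B + R - t0))
        \<le> (w (z 1))\<^sup>2 * w (z (Suc n)) * (1 / (wsum (Suc n) z * wsum n z))"
      using pos by (intro mult_left_mono) auto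
    then show ?thesis by (simp add: R_def decrement_def)
  qed
qed

lemma has_bochner_integral_weight_monomial:
  assumes K: "finite K" "1 \<in> K" and J: "J \<subseteq> K - {1}"
    and B: "\<And>x. x \<in> space Q \<Longrightarrow> w x \<le> B"
  shows "has_bochner_integral (sample K) (\<lambda>z. (w (z 1))\<^sup>2 * (\<Prod>j\<in>J. w (z j))) (\<integral>x. (w x)\<^sup>2 \<partial>Q)"
proof -
  define F where "F j = (if j = 1 then (\<lambda>x. (w x)\<^sup>2) else w)" for j :: nat
  have F: "integrable Q (F j)" for j
    using integrable_weight integrable_weight_square[OF B] by (simp add: F_def)
  have J': "finite J" "1 \<notin> J" "insert 1 J \<subseteq> K"
    using K J finite_subset by auto
  have monomial: "(w (z 1))\<^sup>2 * (\<Prod>j\<in>J. w (z j)) = (\<Prod>j\<in>insert 1 J. F j (z j))" for z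
  proof -
    have "(\<Prod>j\<in>J. F j (z j)) = (\<Prod>j\<in>J. w (z j))"
      using J' by (intro prod.cong) (auto simp: F_def)
    then show ?thesis using J' by (simp add: F_def)
  qed
  have "(\<Prod>j\<in>J. integral\<^sup>L Q (F j)) = 1"
    using J' by (intro prod.neutral) (auto simp: F_def integral_weight)
  then have "(\<integral>z. (\<Prod>j\<in>insert 1 J. F j (z j)) \<partial>sample K) = (\<integral>x. (w x)\<^sup>2 \<partial>Q)"
    using J' F K by (subst integral_PiM_prod) (auto simp: F_def)
  moreover have "integrable (sample K) (\<lambda>z. \<Prod>j\<in>insert 1 J. F j (z j))"
    using J' F K by (intro integrable_PiM_prod) auto
  ultimately show ?thesis
    unfolding monomial has_bochner_integral_iff by blast
qed

lemma has_bochner_integral_weight_affine: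
  assumes n: "1 \<le> n" and B: "\<And>x. x \<in> space Q \<Longrightarrow> w x \<le> B"
  shows "has_bochner_integral (sample {1..Suc n})
    (\<lambda>z. (w (z 1))\<^sup>2 * w (z (Suc n)) * (\<alpha> + \<beta> * (\<Sum>i\<in>{2..n}. w (z i))))
    ((\<integral>x. (w x)\<^sup>2 \<partial>Q) * (\<alpha> + \<beta> * (real n - 1)))"
proof -
  define K where "K = {1..Suc n}"
  define C where "C = (\<integral>x. (w x)\<^sup>2 \<partial>Q)"
  have monomial: "has_bochner_integral (sample K) (\<lambda>z. (w (z 1))\<^sup>2 * (\<Prod>j\<in>J. w (z j))) C"
    if "J \<subseteq> K - {1}" for J
    using that B unfolding C_def by (intro has_bochner_integral_weight_monomial) (auto simp: K_def)
  have "has_bochner_integral (sample K)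
      (\<lambda>z. \<alpha> * ((w (z 1))\<^sup>2 * (\<Prod>j\<in>{Suc n}. w (z j))) +
        \<beta> * (\<Sum>i\<in>{2..n}. (w (z 1))\<^sup>2 * (\<Prod>j\<in>{i, Suc n}. w (z j))))
      (\<alpha> * C + \<beta> * (\<Sum>i\<in>{2..n}. C))"
    using n by (intro has_bochner_integral_add has_bochner_integral_mult_right has_bochner_integral_sum
        monomial) (auto simp: K_def)
  moreover have "(\<lambda>z. \<alpha> * ((w (z 1))\<^sup>2 * (\<Prod>j\<in>{Suc n}. w (z j))) +
        \<beta> * (\<Sum>i\<in>{2..n}. (w (z 1))\<^sup>2 * (\<Prod>j\<in>{i, Suc n}. w (z j))))
      = (\<lambda>z. (w (z 1))\<^sup>2 * w (z (Suc n)) * (\<alpha> + \<beta> * (\<Sum>i\<in>{2..n}. w (z i))))"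
  proof
    fix z
    have "(\<Sum>i\<in>{2..n}. (w (z 1))\<^sup>2 * (\<Prod>j\<in>{i, Suc n}. w (z j)))
        = (\<Sum>i\<in>{2..n}. (w (z 1))\<^sup>2 * w (z (Suc n)) * w (z i))"
      by (intro sum.cong) auto
    then show "\<alpha> * ((w (z 1))\<^sup>2 * (\<Prod>j\<in>{Suc n}. w (z j))) +
        \<beta> * (\<Sum>i\<in>{2..n}. (w (z 1))\<^sup>2 * (\<Prod>j\<in>{i, Suc n}. w (z j)))
      = (w (z 1))\<^sup>2 * w (z (Suc n)) * (\<alpha> + \<beta> * (\<Sum>i\<in>{2..n}. w (z i)))"
      by (simp add: algebra_simps sum_distrib_left)
  qed
  moreover have "\<alpha> * C + \<beta> * (\<Sum>i\<in>{2..n}. C) = C * (\<alpha> + \<beta> * (real n - 1))"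
  proof -
    have sum_C: "(\<Sum>i\<in>{2..n}. C) = (real n - 1) * C"
      using n by (simp add: of_nat_diff)
    show ?thesis
      unfolding sum_C by (simp add: algebra_simps)
  qed
  ultimately show ?thesis
    by (simp only: K_def C_def)
qed

lemma integral_decrement_ge:
  assumes n: "1 \<le> n" and B: "\<And>x. x \<in> space Q \<Longrightarrow> w x \<le> B"
  shows "(\<integral>x. (w x)\<^sup>2 \<partial>Q) / (2 * B + real n - 1)\<^sup>2 \<le> (\<integral>z. decrement n z \<partial>sample {1..Suc n})"
proof -
  define t0 where "t0 = 2 * B + real n - 1"
  have t0: "0 < t0" using weight_bound_ge_1[OF B] n by (simp add: t0_def)
  let ?\<alpha> = "1 / t0\<^sup>2 - 2 / t0 ^ 3 * (2 * B - t0)" and ?\<beta> = "- (2 / t0 ^ 3)"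
  let ?tangent = "\<lambda>z. (w (z 1))\<^sup>2 * w (z (Suc n)) * (?\<alpha> + ?\<beta> * (\<Sum>i\<in>{2..n}. w (z i)))"
  have affine: "a - b * (c - t) + - b * d = a - b * (c + d - t)" for a b c d t :: real
    by (simp add: algebra_simps)
  have "?\<alpha> + ?\<beta> * (real n - 1) = 1 / t0\<^sup>2 - 2 / t0 ^ 3 * (2 * B + (real n - 1) - t0)"
    by (rule affine)
  also have "\<dots> = 1 / t0\<^sup>2"
    by (simp add: t0_def)
  finally have tangent: "has_bochner_integral (sample {1..Suc n}) ?tangent ((\<integral>x. (w x)\<^sup>2 \<partial>Q) * (1 / t0\<^sup>2))"
    using has_bochner_integral_weight_affine[OF n B, of ?\<alpha> ?\<beta>] by (simp only:)
  have "(\<integral>z. ?tangent z \<partial>sample {1..Suc n}) \<le> (\<integral>z. decrement n z \<partial>sample {1..Suc n})"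
  proof (rule integral_mono)
    show "integrable (sample {1..Suc n}) ?tangent"
      using tangent by (simp add: has_bochner_integral_iff)
    show "integrable (sample {1..Suc n}) (decrement n)"
      using n by (intro integrable_decrement) auto
    show "?tangent z \<le> decrement n z" if "z \<in> space (sample {1..Suc n})" for z
      unfolding affine by (rule decrement_ge_tangent[OF that order.refl n B t0])
  qed
  then show ?thesis
    using has_bochner_integral_integral_eq[OF tangent] by (simp add: t0_def)
qed

end

section \<open>The i-SIR rejection probability\<close>

lemma eps'_constant_on_unit_interval:
  assumes "real N \<le> x" "x \<le> y" "y < real N + 1"
  shows "eps' M p q x = eps' M p q y"
proof -
  have "\<lfloor>x\<rfloor> = int N" "\<lfloor>y\<rfloor> = int N"
    using assms by (simp_all add: floor_eq_iff)
  then show ?thesis by (simp add: eps'_def)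
qed

lemma one_le_nat_floor:
  fixes x :: real
  assumes "1 \<le> x"
  shows "1 \<le> nat \<lfloor>x\<rfloor>"
  using assms by linarith

locale isir_setting =
  fixes M :: "'a measure" and p q :: "'a \<Rightarrow> real"
  assumes p_measurable[measurable]: "p \<in> borel_measurable M"
    and q_measurable[measurable]: "q \<in> borel_measurable M"
    and p_nonneg: "\<forall>x\<in>space M. 0 \<le> p x" and q_nonneg: "\<forall>x\<in>space M. 0 \<le> q x"
    and p_density: "(\<integral>\<^sup>+ x. ennreal (p x) \<partial>M) = 1"
    and q_density: "(\<integral>\<^sup>+ x. ennreal (q x) \<partial>M) = 1"
    and q_pos: "\<forall>x\<in>space M. p x > 0 \<longrightarrow> q x > 0"
begin

definition proposal :: "'a measure" where
  "proposal = density M (\<lambda>x. ennreal (q x))"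

lemma sets_proposal[measurable_cong]: "sets proposal = sets M"
  by (simp add: proposal_def)

lemma space_proposal[simp]: "space proposal = space M"
  by (simp add: proposal_def)

lemma wgt_measurable[measurable]: "wgt p q \<in> borel_measurable M"
  unfolding wgt_def[abs_def] by measurable

lemma wgt_nonneg: "x \<in> space M \<Longrightarrow> 0 \<le> wgt p q x"
  using p_nonneg q_nonneg by (auto simp: wgt_def)

lemma q_mult_wgt: "x \<in> space M \<Longrightarrow> q x * wgt p q x = indicator {x \<in> space M. 0 < p x} x * p x"
  using q_pos by (auto simp: wgt_def)

lemma prob_space_proposal: "prob_space proposal"
proof (rule prob_spaceI)
  have "emeasure proposal (space proposal) = (\<integral>\<^sup>+ x. ennreal (q x) * indicator (space M) x \<partial>M)"
    unfolding proposal_def by (subst emeasure_density) auto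
  also have "\<dots> = (\<integral>\<^sup>+ x. ennreal (q x) \<partial>M)"
    by (rule nn_integral_cong) auto
  finally show "emeasure proposal (space proposal) = 1" using q_density by simp
qed

lemma integral_target_eq_weighted:
  assumes [measurable]: "f \<in> borel_measurable M"
  shows "(\<integral>x. indicator {x \<in> space M. 0 < p x} x * f x \<partial>density M (\<lambda>x. ennreal (p x)))
    = (\<integral>x. wgt p q x * f x \<partial>proposal)"
proof -
  have "(\<integral>x. indicator {x \<in> space M. 0 < p x} x * f x \<partial>density M (\<lambda>x. ennreal (p x)))
      = (\<integral>x. p x * (indicator {x \<in> space M. 0 < p x} x * f x) \<partial>M)"
    using p_nonneg by (subst integral_density) auto
  also have "\<dots> = (\<integral>x. q x * (wgt p q x * f x) \<partial>M)"
    using q_mult_wgt by (intro Bochner_Integration.integral_cong) (auto simp: algebra_simps)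
  also have "\<dots> = (\<integral>x. wgt p q x * f x \<partial>proposal)"
    unfolding proposal_def using q_nonneg by (subst integral_density) auto
  finally show ?thesis .
qed

lemma integral_wgt: "(\<integral>x. wgt p q x \<partial>proposal) = 1"
proof -
  have "(\<integral>\<^sup>+ x. ennreal (wgt p q x) \<partial>proposal) = (\<integral>\<^sup>+ x. ennreal (q x) * ennreal (wgt p q x) \<partial>M)"
    unfolding proposal_def by (subst nn_integral_density) auto
  also have "\<dots> = (\<integral>\<^sup>+ x. ennreal (p x) \<partial>M)"
  proof (rule nn_integral_cong)
    fix x assume x: "x \<in> space M"
    then have "ennreal (q x) * ennreal (wgt p q x) = ennreal (q x * wgt p q x)"
      using q_nonneg wgt_nonneg by (simp add: ennreal_mult)
    then show "ennreal (q x) * ennreal (wgt p q x) = ennreal (p x)"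
      using q_mult_wgt[OF x] p_nonneg x by (auto simp: indicator_def)
  qed
  finally show ?thesis
    using p_density wgt_nonneg by (subst integral_eq_nn_integral) auto
qed

sublocale importance_weight proposal "wgt p q"
  using prob_space_proposal wgt_nonneg integral_wgt
  by (simp add: importance_weight_def importance_weight_axioms_def)

lemma eps_eq_integral_ratio:
  assumes n: "1 \<le> n"
  shows "eps M p q n = (\<integral>z. ratio n z \<partial>sample {1..n})"
proof -
  let ?w = "wgt p q"
  define h where "h y z = ?w y / (?w y + (\<Sum>i\<in>{2..n}. ?w (z i)))" for y z
  have h_measurable: "(\<lambda>(y, z). h y z) \<in> borel_measurable (proposal \<Otimes>\<^sub>M sample {2..n})"
    unfolding h_def by measurable
  have "eps M p q n = (\<integral>y. indicator {x \<in> space M. 0 < p x} y * (\<integral>z. h y z \<partial>sample {2..n})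
      \<partial>density M (\<lambda>x. ennreal (p x)))"
    unfolding eps_def proposal_def[symmetric] h_def ..
  also have "\<dots> = (\<integral>y. ?w y * (\<integral>z. h y z \<partial>sample {2..n}) \<partial>proposal)"
    using sigma_finite_measure.borel_measurable_lebesgue_integral[OF _ h_measurable] prob_space_sample
    by (intro integral_target_eq_weighted) (auto simp: prob_space_imp_sigma_finite)
  also have "\<dots> = (\<integral>y. (\<integral>z. ratio n (z(1 := y)) \<partial>sample {2..n}) \<partial>proposal)"
  proof (intro Bochner_Integration.integral_cong refl)
    fix y
    have "ratio n (z(1 := y)) = ?w y * h y z" for z
    proof -
      have "wsum n (z(1 := y)) = ?w y + (\<Sum>i\<in>{2..n}. ?w (z i))"
        unfolding wsum_def using n by (simp add: sum.atLeast_Suc_atMost numeral_2_eq_2)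
      then show ?thesis by (simp add: ratio_def h_def power2_eq_square)
    qed
    then show "?w y * (\<integral>z. h y z \<partial>sample {2..n}) = (\<integral>z. ratio n (z(1 := y)) \<partial>sample {2..n})"
      by simp
  qed
  also have "\<dots> = (\<integral>z. ratio n z \<partial>sample (insert 1 {2..n}))"
    using n by (intro integral_PiM_insert_rev[symmetric] integrable_ratio) auto
  also have "insert 1 {2..n} = {1..n}"
    using n by auto
  finally show ?thesis .
qed

lemma eps'_eq_integral_decrement:
  assumes "1 \<le> l"
  shows "eps' M p q l = - (\<integral>z. decrement (nat \<lfloor>l\<rfloor>) z \<partial>sample {1..Suc (nat \<lfloor>l\<rfloor>)})"
  unfolding eps'_def using integral_ratio_Suc_diff eps_eq_integral_ratio one_le_nat_floor[OF assms]
  by (metis Suc_eq_plus1 le_SucI)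

lemma eps'_neg:
  assumes "1 \<le> l"
  shows "eps' M p q l < 0"
  using integral_decrement_pos[OF one_le_nat_floor[OF assms]] eps'_eq_integral_decrement[OF assms]
  by simp

lemma eps'_strict_mono_floor:
  assumes "1 \<le> x" "\<lfloor>x\<rfloor> < \<lfloor>y\<rfloor>"
  shows "eps' M p q x < eps' M p q y"
proof -
  have "1 \<le> y" "nat \<lfloor>x\<rfloor> < nat \<lfloor>y\<rfloor>" using assms by linarith+
  then show ?thesis
    using integral_decrement_strict_antimono[OF one_le_nat_floor[OF assms(1)]]
      eps'_eq_integral_decrement assms(1) by simp
qed

lemma eps'_less_on_next_interval:
  assumes "1 \<le> N" "real N \<le> x" "x < real N + 1" "real N + 1 \<le> y"
  shows "eps' M p q x < eps' M p q y"
proof (rule eps'_strict_mono_floor)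
  have "\<lfloor>x\<rfloor> = int N" using assms by (simp add: floor_eq_iff)
  moreover have "int N + 1 \<le> \<lfloor>y\<rfloor>" using assms by (simp add: le_floor_iff)
  ultimately show "\<lfloor>x\<rfloor> < \<lfloor>y\<rfloor>" by simp
qed (use assms in simp)

lemma eps'_mono: "1 \<le> x \<Longrightarrow> x \<le> y \<Longrightarrow> eps' M p q x \<le> eps' M p q y"
  using eps'_strict_mono_floor[of x y] floor_mono[of x y] by (cases "\<lfloor>x\<rfloor> = \<lfloor>y\<rfloor>") (auto simp: eps'_def)

lemma abs_eps'_bounds:
  assumes l: "1 \<le> l" and B: "\<And>x. x \<in> space M \<Longrightarrow> wgt p q x \<le> B"
  shows "(\<integral>x. (wgt p q x)\<^sup>2 \<partial>proposal) / (2 * B + of_int \<lfloor>l\<rfloor> - 1)\<^sup>2 \<le> \<bar>eps' M p q l\<bar>"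
    and "\<bar>eps' M p q l\<bar> \<le> B / (of_int \<lfloor>l\<rfloor> * (of_int \<lfloor>l\<rfloor> + 1))"
proof -
  have abs_eq: "\<bar>eps' M p q l\<bar> = (\<integral>z. decrement (nat \<lfloor>l\<rfloor>) z \<partial>sample {1..Suc (nat \<lfloor>l\<rfloor>)})"
    using eps'_neg[OF l] eps'_eq_integral_decrement[OF l] by simp
  have floor: "(of_int \<lfloor>l\<rfloor> :: real) = real (nat \<lfloor>l\<rfloor>)"
    using l by simp
  show "(\<integral>x. (wgt p q x)\<^sup>2 \<partial>proposal) / (2 * B + of_int \<lfloor>l\<rfloor> - 1)\<^sup>2 \<le> \<bar>eps' M p q l\<bar>"
    unfolding abs_eq floor using one_le_nat_floor[OF l] B by (intro integral_decrement_ge) auto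
  show "\<bar>eps' M p q l\<bar> \<le> B / (of_int \<lfloor>l\<rfloor> * (of_int \<lfloor>l\<rfloor> + 1))"
    unfolding abs_eq floor using one_le_nat_floor[OF l] B by (intro integral_decrement_le) auto
qed

lemma integral_target_wgt: "(\<integral>x. indicator {x \<in> space M. 0 < p x} x * wgt p q x \<partial>density M (\<lambda>x. ennreal (p x)))
    = (\<integral>x. (wgt p q x)\<^sup>2 \<partial>proposal)"
  by (simp add: integral_target_eq_weighted power2_eq_square)

end

theorem lemma8p3:
  fixes M :: "'a measure" and p q :: "'a \<Rightarrow> real"
  assumes sf: "sigma_finite_measure M"
    and p_meas: "p \<in> borel_measurable M" and q_meas: "q \<in> borel_measurable M"
    and p_nonneg: "\<forall>x\<in>space M. 0 \<le> p x" and q_nonneg: "\<forall>x\<in>space M. 0 \<le> q x"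
    and p_dens: "(\<integral>\<^sup>+ x. ennreal (p x) \<partial>M) = 1"
    and q_dens: "(\<integral>\<^sup>+ x. ennreal (q x) \<partial>M) = 1"
    and q_pos: "\<forall>x\<in>space M. p x > 0 \<longrightarrow> q x > 0"
  shows "(\<forall>x y. 1 \<le> x \<longrightarrow> x \<le> y \<longrightarrow> eps' M p q x \<le> eps' M p q y) \<and>
     (\<forall>x. 1 \<le> x \<longrightarrow> eps' M p q x < 0) \<and>
     (\<forall>N::nat. \<forall>x y. 1 \<le> N \<longrightarrow> real N \<le> x \<longrightarrow> x \<le> y \<longrightarrow> y < real N + 1
            \<longrightarrow> eps' M p q x = eps' M p q y) \<and>
     (\<forall>N::nat. \<forall>x y. 1 \<le> N \<longrightarrow> real N \<le> x \<longrightarrow> x < real N + 1 \<longrightarrow> real N + 1 \<le> y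
            \<longrightarrow> eps' M p q x < eps' M p q y) \<and>
     (bdd_above (wgt p q ` space M) \<longrightarrow>
          (let wh = (SUP x\<in>space M. wgt p q x);
               C = (\<integral> x. indicator {x \<in> space M. p x > 0} x * wgt p q x
                      \<partial>(density M (\<lambda>x. ennreal (p x))))
           in 1 \<le> C \<and> C \<le> wh \<and>
              (\<forall>l::real. 1 \<le> l \<longrightarrow>
                 C / (2 * wh + of_int \<lfloor>l\<rfloor> - 1)\<^sup>2 \<le> \<bar>eps' M p q l\<bar> \<and>
                 \<bar>eps' M p q l\<bar> \<le> wh / (of_int \<lfloor>l\<rfloor> * (of_int \<lfloor>l\<rfloor> + 1)))))"
proof -
  interpret isir_setting M p q
    using assms by unfold_locales
  have bounded: "let wh = (SUP x\<in>space M. wgt p q x); C = (\<integral>x. (wgt p q x)\<^sup>2 \<partial>proposal)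
      in 1 \<le> C \<and> C \<le> wh \<and> (\<forall>l::real. 1 \<le> l \<longrightarrow>
        C / (2 * wh + of_int \<lfloor>l\<rfloor> - 1)\<^sup>2 \<le> \<bar>eps' M p q l\<bar> \<and>
        \<bar>eps' M p q l\<bar> \<le> wh / (of_int \<lfloor>l\<rfloor> * (of_int \<lfloor>l\<rfloor> + 1)))"
    if "bdd_above (wgt p q ` space M)"
  proof -
    have wh: "wgt p q x \<le> (SUP x\<in>space M. wgt p q x)" if "x \<in> space M" for x
      using that \<open>bdd_above _\<close> by (auto intro: cSUP_upper)
    then show ?thesis
      using second_moment_ge_1[OF integrable_weight_square[OF wh]] second_moment_le[OF wh]
        abs_eps'_bounds[OF _ wh] by (simp add: Let_def)
  qed
  show ?thesis
    unfolding integral_target_wgt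
    using eps'_mono eps'_neg eps'_constant_on_unit_interval eps'_less_on_next_interval bounded
    by (intro conjI allI impI) auto
qed

end
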